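(* Consider online non-preemptive scheduling of jobs on $k\ge1$ identical machines, where each job $j$ has a release time $r_j$ and a processing time $p_j$ known at release, and the flow time of a job is its completion time minus its release time. Let FIFO be the algorithm that, whenever some machine is idle and some released job is not yet started, starts the released unstarted job with the earliest release time on an idle machine. Let $P$ be the maximum processing time of all jobs and $D\ge0$. If for any two time points $a\le b$ the total processing time of jobs released in $[a,b]$ is at most $k(b-a)+D$, then the maximum flow time achieved by FIFO is at most $\frac{D}{k}+\frac{2(k-1)P}{k}$. *)

theory Defs
  imports Main "HOL-Library.Library"
begin

text \<open>A non-preemptive schedule on k machines assigns each job a start time s j and a
machine m j (machines are 0,...,k-1); job j runs on m j during [s j, s j + p j).\<close>

definition valid_schedule ::
  "nat \<Rightarrow> 'j set \<Rightarrow> ('j \<Rightarrow> real) \<Rightarrow> ('j \<Rightarrow> real) \<Rightarrow> ('j \<Rightarrow> real) \<Rightarrow> ('j \<Rightarrow> nat) \<Rightarrow> bool" where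
  "valid_schedule k J r p s m \<longleftrightarrow>
     (\<forall>j\<in>J. r j \<le> s j \<and> m j < k) \<and>
     (\<forall>j\<in>J. \<forall>j'\<in>J. j \<noteq> j' \<and> m j = m j' \<longrightarrow> s j + p j \<le> s j' \<or> s j' + p j' \<le> s j)"

definition busy ::
  "'j set \<Rightarrow> ('j \<Rightarrow> real) \<Rightarrow> ('j \<Rightarrow> real) \<Rightarrow> ('j \<Rightarrow> nat) \<Rightarrow> nat \<Rightarrow> real \<Rightarrow> bool" where
  "busy J p s m i t \<longleftrightarrow> (\<exists>j\<in>J. m j = i \<and> s j \<le> t \<and> t < s j + p j)"

text \<open>A schedule is a possible run of FIFO (with arbitrary tie-breaking) iff it is
valid, never leaves a machine idle while a released job is waiting, and starts jobs
in order of release time (a job released strictly earlier never starts later).\<close>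
definition fifo_schedule ::
  "nat \<Rightarrow> 'j set \<Rightarrow> ('j \<Rightarrow> real) \<Rightarrow> ('j \<Rightarrow> real) \<Rightarrow> ('j \<Rightarrow> real) \<Rightarrow> ('j \<Rightarrow> nat) \<Rightarrow> bool" where
  "fifo_schedule k J r p s m \<longleftrightarrow>
     valid_schedule k J r p s m \<and>
     (\<forall>t. (\<exists>j\<in>J. r j \<le> t \<and> t < s j) \<longrightarrow> (\<forall>i<k. busy J p s m i t)) \<and>
     (\<forall>j\<in>J. \<forall>j'\<in>J. r j < r j' \<longrightarrow> s j \<le> s j')"

definition flow_time :: "('j \<Rightarrow> real) \<Rightarrow> ('j \<Rightarrow> real) \<Rightarrow> ('j \<Rightarrow> real) \<Rightarrow> 'j \<Rightarrow> real" where
  "flow_time r p s j = s j + p j - r j"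

end

theory Submission
  imports Defs
begin

(* Fix a job j and an idle time b <= r j of some machine i0 after which, up to an arbitrarily
   small gap, all k machines stay busy until j starts. The work done in this busy window comes
   from jobs running at time b, at most k - 1 of them since i0 is idle, each contributing at
   most P, and from jobs started after b but before j. By work conservation these were not
   waiting at b, and by the FIFO order they were not released after j, so they were released
   in [b, r j] and their total work is at most k (r j - b) + D - p j. Hence
   k (s j - r j) <= D - p j + (k - 1) P, and adding p j <= P bounds the flow time. *)

definition load_bounded ::
  "nat \<Rightarrow> real \<Rightarrow> 'j set \<Rightarrow> ('j \<Rightarrow> real) \<Rightarrow> ('j \<Rightarrow> real) \<Rightarrow> bool" where
  "load_bounded k D J r p \<longleftrightarrow>
     (\<forall>a b. a \<le> b \<longrightarrow> (\<Sum>j\<in>{j\<in>J. a \<le> r j \<and> r j \<le> b}. p j) \<le> real k * (b - a) + D)"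

definition processed_during ::
  "('j \<Rightarrow> real) \<Rightarrow> ('j \<Rightarrow> real) \<Rightarrow> 'j \<Rightarrow> real \<Rightarrow> real \<Rightarrow> real" where
  "processed_during p s j x y = max 0 (min (s j + p j) y - max (s j) x)"

lemma processed_during_nonneg: "0 \<le> processed_during p s j x y"
  by (simp add: processed_during_def)

lemma processed_during_le: "0 \<le> p j \<Longrightarrow> processed_during p s j x y \<le> p j"
  by (simp add: processed_during_def)

lemma processed_during_eq_0:
  "s j + p j \<le> x \<or> y \<le> s j \<Longrightarrow> processed_during p s j x y = 0"
  by (auto simp: processed_during_def)

lemma processed_during_antimono:
  "x \<le> x' \<Longrightarrow> processed_during p s j x' y \<le> processed_during p s j x y"
  by (simp add: processed_during_def)

lemma interval_length_le_sum_processed_during: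
  assumes "finite A"
    and "\<forall>t. x \<le> t \<and> t < y \<longrightarrow> (\<exists>j\<in>A. s j \<le> t \<and> t < s j + p j)"
  shows "y - x \<le> (\<Sum>j\<in>A. processed_during p s j x y)"
  using assms
proof (induction A arbitrary: x rule: finite_remove_induct)
  case empty
  then show ?case by force
next
  case (remove A)
  show ?case
  proof (cases "x < y")
    case False
    moreover have "0 \<le> (\<Sum>j\<in>A. processed_during p s j x y)"
      by (intro sum_nonneg processed_during_nonneg)
    ultimately show ?thesis by linarith
  next
    case True
    then obtain a where a: "a \<in> A" "s a \<le> x" "x < s a + p a"
      using remove.prems by auto
    define d where "d = min (s a + p a) y"
    have "\<exists>j\<in>A - {a}. s j \<le> t \<and> t < s j + p j" if "d \<le> t" "t < y" for t
    proof -
      have "x \<le> t" "s a + p a \<le> t"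
        using that a by (auto simp: d_def)
      then show ?thesis
        using remove.prems that by force
    qed
    then have "y - d \<le> (\<Sum>j\<in>A - {a}. processed_during p s j d y)"
      using remove.IH[OF a(1)] by blast
    also have "\<dots> \<le> (\<Sum>j\<in>A - {a}. processed_during p s j x y)"
      using a True by (intro sum_mono processed_during_antimono) (simp add: d_def)
    finally have
      "y - x \<le> processed_during p s a x y + (\<Sum>j\<in>A - {a}. processed_during p s j x y)"
      using a True by (simp add: processed_during_def d_def)
    then show ?thesis
      using remove.hyps a(1) by (simp add: sum.remove)
  qed
qed

lemma all_busy_imp_length_le_processed_during:
  assumes "valid_schedule k J r p s m" and "finite J"
    and "\<forall>t. x \<le> t \<and> t < y \<longrightarrow> (\<forall>i<k. busy J p s m i t)"
  shows "real k * (y - x) \<le> (\<Sum>j\<in>J. processed_during p s j x y)"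
proof -
  have "y - x \<le> (\<Sum>j\<in>{j\<in>J. m j = i}. processed_during p s j x y)" if "i < k" for i
    using assms(2,3) that
    by (intro interval_length_le_sum_processed_during) (auto simp: busy_def)
  then have
    "real k * (y - x) \<le> (\<Sum>i<k. \<Sum>j\<in>{j\<in>J. m j = i}. processed_during p s j x y)"
    using sum_mono[of "{..<k}" "\<lambda>_. y - x"] by simp
  also have "\<dots> = (\<Sum>j\<in>J. processed_during p s j x y)"
    using assms(1,2) by (intro sum.group) (auto simp: valid_schedule_def)
  finally show ?thesis .
qed

lemma card_running_le_if_idle:
  assumes "valid_schedule k J r p s m" and "i0 < k" and "\<not> busy J p s m i0 t"
  shows "card {j\<in>J. s j \<le> t \<and> t < s j + p j} \<le> k - 1"
proof -
  let ?R = "{j\<in>J. s j \<le> t \<and> t < s j + p j}"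
  have "inj_on m ?R"
    using assms(1) by (fastforce simp: valid_schedule_def intro: inj_onI)
  moreover have "m ` ?R \<subseteq> {..<k} - {i0}"
    using assms by (auto simp: valid_schedule_def busy_def)
  ultimately have "card ?R \<le> card ({..<k} - {i0})"
    by (intro card_inj_on_le) auto
  then show ?thesis using assms(2) by simp
qed

lemma fifo_started_after_idle_released_between:
  assumes "fifo_schedule k J r p s m" and "i0 < k" and "\<not> busy J p s m i0 b"
    and "j \<in> J" and "j' \<in> J" and "b < s j'" and "s j' < s j"
  shows "b < r j' \<and> r j' \<le> r j"
  using assms unfolding fifo_schedule_def by (meson not_le)

lemma processed_during_started_before_idle_le:
  assumes "valid_schedule k J r p s m" and "finite J"
    and "\<forall>j\<in>J. p j \<le> P" and "0 \<le> P"
    and "i0 < k" and "\<not> busy J p s m i0 b" and "b \<le> x"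
  shows "(\<Sum>j\<in>{j\<in>J. s j \<le> b}. processed_during p s j x y) \<le> (real k - 1) * P"
proof -
  let ?R = "{j\<in>J. s j \<le> b \<and> b < s j + p j}"
  have "(\<Sum>j\<in>{j\<in>J. s j \<le> b}. processed_during p s j x y)
      = (\<Sum>j\<in>?R. processed_during p s j x y)"
    using assms(2,7) by (intro sum.mono_neutral_right) (auto intro: processed_during_eq_0)
  also have "\<dots> \<le> (\<Sum>j\<in>?R. P)"
    using assms(3) by (intro sum_mono) (auto simp: processed_during_def)
  also have "\<dots> \<le> (real k - 1) * P"
    using card_running_le_if_idle[OF assms(1,5,6)] assms(4,5)
    by (simp add: mult_right_mono of_nat_diff)
  finally show ?thesis .
qed

lemma processed_during_started_after_idle_le:
  assumes "fifo_schedule k J r p s m" and "finite J" and "\<forall>j\<in>J. 0 \<le> p j"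
    and "load_bounded k D J r p"
    and "i0 < k" and "\<not> busy J p s m i0 b" and "j \<in> J" and "b \<le> r j"
  shows "(\<Sum>j'\<in>{j'\<in>J. b < s j'}. processed_during p s j' x (s j))
    \<le> real k * (r j - b) + D - p j"
proof -
  let ?G = "{j'\<in>J. b < s j' \<and> s j' < s j}"
  let ?R = "{j'\<in>J. b \<le> r j' \<and> r j' \<le> r j}"
  have "?G \<subseteq> ?R - {j}"
  proof
    fix j' assume "j' \<in> ?G"
    with fifo_started_after_idle_released_between[OF assms(1,5,6,7), of j']
    show "j' \<in> ?R - {j}" by auto
  qed
  have load: "(\<Sum>j'\<in>?R. p j') \<le> real k * (r j - b) + D"
    using assms(4,8) unfolding load_bounded_def by blast
  have "(\<Sum>j'\<in>{j'\<in>J. b < s j'}. processed_during p s j' x (s j))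
      = (\<Sum>j'\<in>?G. processed_during p s j' x (s j))"
    using assms(2) by (intro sum.mono_neutral_right) (auto intro: processed_during_eq_0)
  also have "\<dots> \<le> (\<Sum>j'\<in>?G. p j')"
    using assms(3) by (intro sum_mono processed_during_le) auto
  also have "\<dots> \<le> (\<Sum>j'\<in>?R - {j}. p j')"
    using \<open>?G \<subseteq> ?R - {j}\<close> assms(2,3) by (intro sum_mono2) auto
  also have "\<dots> = (\<Sum>j'\<in>?R. p j') - p j"
    using assms(2,7,8) by (subst sum_diff1) auto
  also have "\<dots> \<le> real k * (r j - b) + D - p j"
    using load by linarith
  finally show ?thesis .
qed

(* Idle periods are right-open, so the supremum of the idle times up to r j need not be an
   idle time itself; hence only an approximation. *)
lemma fifo_approx_last_idle_time:
  assumes "fifo_schedule k J r p s m" and "finite J" and "k \<ge> 1"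
    and "j \<in> J" and "0 < e"
  obtains b x i0 where "b \<le> r j" and "b \<le> x" and "x - b < e"
    and "i0 < k" and "\<not> busy J p s m i0 b"
    and "\<forall>t. x \<le> t \<and> t < s j \<longrightarrow> (\<forall>i<k. busy J p s m i t)"
proof -
  define B where "B = {t. t \<le> r j \<and> (\<exists>i<k. \<not> busy J p s m i t)}"
  define t0 where "t0 = min (r j) (Min (s ` J) - 1)"
  have "t0 < s j'" if "j' \<in> J" for j'
  proof -
    have "Min (s ` J) \<le> s j'"
      using assms(2) that by simp
    then show ?thesis
      unfolding t0_def by linarith
  qed
  then have "\<not> busy J p s m 0 t0"
    unfolding busy_def by fastforce
  moreover have "t0 \<le> r j" "0 < k"
    using assms(3) by (simp_all add: t0_def)
  ultimately have "t0 \<in> B"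
    unfolding B_def by blast
  then have "B \<noteq> {}" by blast
  have "bdd_above B"
    unfolding B_def by (rule bdd_aboveI[of _ "r j"]) auto
  have "Sup B - e / 2 < Sup B"
    using assms(5) by simp
  then obtain b where "b \<in> B" and b_close: "Sup B - e / 2 < b"
    using less_cSup_iff[OF \<open>B \<noteq> {}\<close> \<open>bdd_above B\<close>] by blast
  then obtain i0 where "b \<le> r j" "i0 < k" "\<not> busy J p s m i0 b"
    unfolding B_def by blast
  have "b \<le> Sup B"
    using cSup_upper[OF \<open>b \<in> B\<close> \<open>bdd_above B\<close>] .
  have "busy J p s m i t" if "Sup B + e / 2 \<le> t" "t < s j" "i < k" for i t
  proof (cases "t \<le> r j")
    case True
    have "t \<notin> B"
      using that(1) assms(5) cSup_upper[OF _ \<open>bdd_above B\<close>, of t] by linarith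
    then show ?thesis
      using True that(3) unfolding B_def by blast
  next
    case False
    then have "r j \<le> t" by simp \<comment> \<open>j itself is waiting at t\<close>
    then show ?thesis
      using assms(1,4) that(2,3) unfolding fifo_schedule_def by blast
  qed
  moreover have "b \<le> Sup B + e / 2" "Sup B + e / 2 - b < e"
    using \<open>b \<le> Sup B\<close> b_close assms(5) by linarith+
  ultimately show ?thesis
    using that \<open>b \<le> r j\<close> \<open>i0 < k\<close> \<open>\<not> busy J p s m i0 b\<close> by blast
qed

lemma fifo_waiting_time_bound:
  assumes "fifo_schedule k J r p s m" and "finite J" and "k \<ge> 1"
    and "\<forall>j\<in>J. 0 \<le> p j" and "\<forall>j\<in>J. p j \<le> P"
    and "load_bounded k D J r p" and "j \<in> J"
  shows "real k * (s j - r j) \<le> D - p j + (real k - 1) * P"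
proof (rule field_le_epsilon)
  fix e :: real
  assume "0 < e"
  then have "0 < e / real k"
    using assms(3) by simp
  with fifo_approx_last_idle_time[OF assms(1,2,3,7)]
  obtain b x i0 where b: "b \<le> r j" "b \<le> x" "x - b < e / real k"
    and idle: "i0 < k" "\<not> busy J p s m i0 b"
    and all_busy: "\<forall>t. x \<le> t \<and> t < s j \<longrightarrow> (\<forall>i<k. busy J p s m i t)" .
  have valid: "valid_schedule k J r p s m"
    using assms(1) unfolding fifo_schedule_def by blast
  have "0 \<le> P"
    using assms(4,5,7) by force
  have "real k * (s j - x) \<le> (\<Sum>j'\<in>J. processed_during p s j' x (s j))"
    using all_busy_imp_length_le_processed_during[OF valid assms(2) all_busy] .
  also have "\<dots> = (\<Sum>j'\<in>{j'\<in>J. s j' \<le> b}. processed_during p s j' x (s j))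
      + (\<Sum>j'\<in>{j'\<in>J. b < s j'}. processed_during p s j' x (s j))"
    using assms(2) by (subst sum.union_disjoint[symmetric]) (auto intro: sum.cong)
  also have "\<dots> \<le> (real k - 1) * P + (real k * (r j - b) + D - p j)"
    using processed_during_started_before_idle_le[OF valid assms(2,5) \<open>0 \<le> P\<close> idle b(2)]
      processed_during_started_after_idle_le[OF assms(1,2,4,6) idle assms(7) b(1)]
    by (rule add_mono)
  finally have "real k * (s j - r j) \<le> D - p j + (real k - 1) * P + real k * (x - b)"
    by (simp add: algebra_simps)
  moreover have "real k * (x - b) \<le> e"
    using b(3) assms(3) by (simp add: pos_less_divide_eq mult.commute)
  ultimately show "real k * (s j - r j) \<le> D - p j + (real k - 1) * P + e"
    by linarith
qed

lemma fifo_flow_time_bound: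
  assumes "fifo_schedule k J r p s m" and "finite J" and "k \<ge> 1"
    and "\<forall>j\<in>J. 0 \<le> p j" and "\<forall>j\<in>J. p j \<le> P"
    and "load_bounded k D J r p" and "j \<in> J"
  shows "flow_time r p s j \<le> D / real k + 2 * (real k - 1) * P / real k"
proof -
  have "(real k - 1) * p j \<le> (real k - 1) * P"
    using assms(3,5,7) by (intro mult_left_mono) auto
  then have "real k * flow_time r p s j \<le> D + 2 * (real k - 1) * P"
    using fifo_waiting_time_bound[OF assms] by (simp add: flow_time_def algebra_simps)
  then show ?thesis
    using assms(3)
    by (simp add: pos_le_divide_eq add_divide_distrib[symmetric] mult.commute)
qed

theorem lemma4p6:
  fixes k :: nat and J :: "'j set" and r p s :: "'j \<Rightarrow> real" and m :: "'j \<Rightarrow> nat"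
    and D :: real
  assumes "k \<ge> 1" and "finite J" and "J \<noteq> {}"
    and "\<forall>j\<in>J. p j \<ge> 0"
    and "D \<ge> 0"
    and "\<forall>a b. a \<le> b \<longrightarrow> (\<Sum>j\<in>{j\<in>J. a \<le> r j \<and> r j \<le> b}. p j) \<le> real k * (b - a) + D"
    and "fifo_schedule k J r p s m"
  shows "(MAX j\<in>J. flow_time r p s j) \<le> D / real k + 2 * (real k - 1) * (MAX j\<in>J. p j) / real k"
proof -
  have "load_bounded k D J r p"
    using assms(6) unfolding load_bounded_def .
  moreover have "\<forall>j\<in>J. p j \<le> (MAX j\<in>J. p j)"
    using assms(2) by simp
  ultimately show ?thesis
    using fifo_flow_time_bound[OF assms(7,2,1,4)] assms(2,3) by (simp add: Max_le_iff)
qed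

end
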